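(* Let $(\Omega,\mu)$ be a $\sigma$-finite measure space, $p_0\ge 1$, and let $f,g$ be measurable functions on $\Omega$ such that there exists $\tau_0\in(0,\infty)$ with $\lambda_f(\tau)\le\lambda_g(\tau)$ for $\tau<\tau_0$ and $\lambda_f(\tau)\ge\lambda_g(\tau)$ for $\tau>\tau_0$. Suppose $f\in L^{p_0}(\Omega)$ and $\|f\|_{p_0}\ge\|g\|_{p_0}$. Then for all $t>0$, \[ \int_0^t g^*(s)^{p_0}\,ds\le\int_0^t f^*(s)^{p_0}\,ds . \]
   Context: For a measurable $f$ on $(\Omega,\mu)$: the distribution function is $\lambda_f(\tau)=\mu\{x:|f(x)|>\tau\}$, $\tau>0$, and the nonincreasing rearrangement is $f^*(s)=\inf\{\tau>0:\lambda_f(\tau)\le s\}$, $s>0$. *)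

theory Defs
  imports "HOL-Analysis.Analysis"
begin

definition distrib_fun :: "'a measure \<Rightarrow> ('a \<Rightarrow> real) \<Rightarrow> real \<Rightarrow> ennreal" where
  "distrib_fun M f \<tau> = emeasure M {x \<in> space M. \<bar>f x\<bar> > \<tau>}"

text \<open>Nonincreasing rearrangement: f*(s) = inf {tau > 0. lambda_f(tau) <= s},
  valued in [0, infinity] (the infimum of the empty set is infinity).\<close>
definition rearrangement :: "'a measure \<Rightarrow> ('a \<Rightarrow> real) \<Rightarrow> real \<Rightarrow> ennreal" where
  "rearrangement M f s = Inf (ennreal ` {\<tau>. \<tau> > 0 \<and> distrib_fun M f \<tau> \<le> ennreal s})"

definition epowr :: "ennreal \<Rightarrow> real \<Rightarrow> ennreal" where
  "epowr x p = (if x = \<infinity> then \<infinity> else ennreal (enn2real x powr p))"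

definition Lp_norm :: "'a measure \<Rightarrow> real \<Rightarrow> ('a \<Rightarrow> real) \<Rightarrow> ennreal" where
  "Lp_norm M p f = epowr (\<integral>\<^sup>+ x. ennreal (\<bar>f x\<bar> powr p) \<partial>M) (1 / p)"

definition in_Lp :: "'a measure \<Rightarrow> real \<Rightarrow> ('a \<Rightarrow> real) \<Rightarrow> bool" where
  "in_Lp M p f \<longleftrightarrow> f \<in> borel_measurable M \<and> integrable M (\<lambda>x. \<bar>f x\<bar> powr p)"

end

theory Submission
  imports Defs
begin

text \<open>
  Both sides are layer-cake integrals: since the measure of
  \<open>{s \<in> (0,t). \<tau> < f*(s)}\<close> is \<open>min t \<lambda>\<^sub>f(\<tau>)\<close>, the integral of \<open>(f*)\<^sup>p\<close> over \<open>(0,t)\<close> is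
  \<open>\<integral> p \<tau>\<^sup>p\<^sup>-\<^sup>1 min t \<lambda>\<^sub>f(\<tau>) d\<tau>\<close>, while \<open>\<parallel>f\<parallel>\<^sub>p\<^sup>p = \<integral> p \<tau>\<^sup>p\<^sup>-\<^sup>1 \<lambda>\<^sub>f(\<tau>) d\<tau>\<close>.
  If \<open>\<lambda>\<^sub>f\<close> exceeds \<open>t\<close> somewhere beyond \<open>\<tau>\<^sub>0\<close>, then by monotonicity \<open>min t \<lambda>\<^sub>f = t\<close> below
  \<open>\<tau>\<^sub>0\<close> and the truncated integrands compare pointwise. Otherwise truncation does
  not affect \<open>\<lambda>\<^sub>f, \<lambda>\<^sub>g\<close> beyond \<open>\<tau>\<^sub>0\<close>, and below \<open>\<tau>\<^sub>0\<close> truncating the larger of two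
  numbers loses at least as much as truncating the smaller one; so the loss for \<open>g\<close>
  dominates the loss for \<open>f\<close>, and \<open>\<parallel>g\<parallel>\<^sub>p \<le> \<parallel>f\<parallel>\<^sub>p < \<infinity>\<close> finishes the argument.
\<close>

definition powr_weight :: "real \<Rightarrow> real \<Rightarrow> ennreal" where
  "powr_weight p \<tau> = ennreal (p * \<tau> powr (p - 1)) * indicator {0<..} \<tau>"

lemma borel_measurable_powr_weight [measurable]: "powr_weight p \<in> borel_measurable borel"
  unfolding powr_weight_def by measurable

lemma powr_weight_nonpos [simp]: "\<tau> \<le> 0 \<Longrightarrow> powr_weight p \<tau> = 0"
  by (simp add: powr_weight_def)

lemma has_integral_deriv_powr:
  fixes p r :: real
  assumes p: "p \<ge> 1" and r: "r \<ge> 0"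
  shows "((\<lambda>x. p * x powr (p - 1)) has_integral r powr p) {0..r}"
proof -
  have "((\<lambda>x. p * x powr (p - 1)) has_integral (r powr p - 0 powr p)) {0..r}"
  proof (rule fundamental_theorem_of_calculus_interior)
    show "continuous_on {0..r} (\<lambda>x. x powr p)"
      using p by (intro continuous_on_powr') (auto intro: continuous_intros)
    fix x assume "x \<in> {0<..<r}"
    then show "((\<lambda>x. x powr p) has_vector_derivative p * x powr (p - 1)) (at x)"
      unfolding has_real_derivative_iff_has_vector_derivative[symmetric]
      by (auto intro!: derivative_eq_intros)
  qed (use r in auto)
  then show ?thesis using p by simp
qed

lemma nn_integral_powr_weight_below:
  assumes p: "p \<ge> 1"
  shows "(\<integral>\<^sup>+\<tau>. powr_weight p \<tau> * indicator {\<tau>. ennreal \<tau> < u} \<tau> \<partial>lborel) = epowr u p"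
proof -
  let ?I = "\<lambda>u. \<integral>\<^sup>+\<tau>. powr_weight p \<tau> * indicator {\<tau>. ennreal \<tau> < u} \<tau> \<partial>lborel"
  have real_case: "?I (ennreal r) = ennreal (r powr p)" if r: "r \<ge> 0" for r
  proof -
    have "?I (ennreal r) = (\<integral>\<^sup>+\<tau>. ennreal (indicator {0..r} \<tau> * (p * \<tau> powr (p - 1))) \<partial>lborel)"
      using AE_lborel_singleton[of 0] AE_lborel_singleton[of r]
      by (intro nn_integral_cong_AE, eventually_elim)
        (use r p in \<open>auto simp: powr_weight_def indicator_def ennreal_less_iff\<close>)
    also have "\<dots> = ennreal (r powr p)"
      using nn_integral_has_integral_lebesgue[OF _ has_integral_deriv_powr[OF p r]] p by auto
    finally show ?thesis .
  qed
  show ?thesis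
  proof (cases u)
    case (real r)
    then show ?thesis using real_case by (simp add: epowr_def)
  next
    case top
    have "of_nat n \<le> ?I \<infinity>" for n
    proof -
      have "of_nat n \<le> ennreal (real n powr p)"
        using powr_mono[of 1 p "real n"] p
        by (cases "n = 0") (auto simp: ennreal_of_nat_eq_real_of_nat)
      also have "\<dots> = ?I (ennreal (real n))"
        by (simp add: real_case)
      also have "\<dots> \<le> ?I \<infinity>"
        by (intro nn_integral_mono) (auto simp: indicator_def)
      finally show ?thesis .
    qed
    then have "?I \<infinity> = \<infinity>"
      using ennreal_SUP_eq_top[of UNIV "\<lambda>_. ?I \<infinity>"] by auto
    then show ?thesis using top by (simp add: epowr_def)
  qed
qed

lemma nn_integral_epowr_layer_cake:
  fixes h :: "'a \<Rightarrow> ennreal"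
  assumes "sigma_finite_measure M" and p: "p \<ge> 1" and [measurable]: "h \<in> borel_measurable M"
  shows "(\<integral>\<^sup>+x. epowr (h x) p \<partial>M)
    = (\<integral>\<^sup>+\<tau>. powr_weight p \<tau> * emeasure M {x \<in> space M. ennreal \<tau> < h x} \<partial>lborel)"
proof -
  interpret pair_sigma_finite M lborel
    unfolding pair_sigma_finite_def using assms(1) lborel.sigma_finite_measure_axioms by auto
  have pair_measurable: "(\<lambda>(x, \<tau>). powr_weight p \<tau> * indicator {\<tau>. ennreal \<tau> < h x} \<tau>)
     \<in> borel_measurable (M \<Otimes>\<^sub>M lborel)"
    unfolding indicator_def by measurable
  have "(\<integral>\<^sup>+x. epowr (h x) p \<partial>M)
      = (\<integral>\<^sup>+x. (\<integral>\<^sup>+\<tau>. powr_weight p \<tau> * indicator {\<tau>. ennreal \<tau> < h x} \<tau> \<partial>lborel) \<partial>M)"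
    by (simp add: nn_integral_powr_weight_below[OF p])
  also have "\<dots> = (\<integral>\<^sup>+\<tau>. (\<integral>\<^sup>+x. powr_weight p \<tau> * indicator {\<tau>. ennreal \<tau> < h x} \<tau> \<partial>M) \<partial>lborel)"
    using Fubini'[OF pair_measurable] by simp
  also have "\<dots> = (\<integral>\<^sup>+\<tau>. (\<integral>\<^sup>+x. powr_weight p \<tau> * indicator {x \<in> space M. ennreal \<tau> < h x} x \<partial>M) \<partial>lborel)"
    by (intro nn_integral_cong) (auto simp: indicator_def)
  also have "\<dots> = (\<integral>\<^sup>+\<tau>. powr_weight p \<tau> * emeasure M {x \<in> space M. ennreal \<tau> < h x} \<partial>lborel)"
    by (intro nn_integral_cong nn_integral_cmult_indicator) measurable
  finally show ?thesis .
qed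

lemma borel_measurable_antimono_ennreal:
  fixes h :: "real \<Rightarrow> ennreal"
  assumes "antimono h"
  shows "h \<in> borel_measurable borel"
proof (rule borel_measurableI_greater)
  fix a
  have "is_interval {x. a < h x}"
    using assms unfolding is_interval_1 antimono_def by (blast intro: less_le_trans)
  then show "{x \<in> space borel. a < h x} \<in> sets borel"
    by (simp add: real_interval_borel_measurable)
qed

lemma distrib_fun_antimono:
  assumes "f \<in> borel_measurable M"
  shows "antimono (distrib_fun M f)"
  unfolding antimono_def distrib_fun_def using assms by (auto intro!: emeasure_mono)

lemma borel_measurable_distrib_fun:
  "f \<in> borel_measurable M \<Longrightarrow> distrib_fun M f \<in> borel_measurable borel"
  by (intro borel_measurable_antimono_ennreal distrib_fun_antimono)

lemma distrib_fun_eq_SUP: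
  assumes [measurable]: "f \<in> borel_measurable M"
  shows "distrib_fun M f \<tau> = (SUP n. distrib_fun M f (\<tau> + 1 / Suc n))"
proof -
  let ?A = "\<lambda>n. {x \<in> space M. \<tau> + 1 / Suc n < \<bar>f x\<bar>}"
  have "incseq ?A"
    by (intro incseq_SucI) (auto intro: order.strict_trans1[rotated] simp: frac_le)
  then have "(SUP n. emeasure M (?A n)) = emeasure M (\<Union>n. ?A n)"
    by (intro SUP_emeasure_incseq) auto
  moreover have "(\<Union>n. ?A n) = {x \<in> space M. \<tau> < \<bar>f x\<bar>}"
  proof (intro equalityI subsetI)
    fix x assume "x \<in> {x \<in> space M. \<tau> < \<bar>f x\<bar>}"
    moreover from this obtain n where "1 / Suc n < \<bar>f x\<bar> - \<tau>"
      using nat_approx_posE[of "\<bar>f x\<bar> - \<tau>"] by auto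
    ultimately show "x \<in> (\<Union>n. ?A n)" by (auto intro: exI[of _ n])
  qed (auto intro: order.strict_trans1[rotated] simp: add_increasing2)
  ultimately show ?thesis
    unfolding distrib_fun_def by simp
qed

lemma rearrangement_antimono: "antimono (rearrangement M f)"
  unfolding antimono_def rearrangement_def
  by (intro allI impI Inf_superset_mono image_mono) (auto intro: order_trans ennreal_leI)

text \<open>Right continuity of \<open>\<lambda>\<^sub>f\<close> is what makes the strict inequalities match.\<close>

lemma less_rearrangement_iff:
  assumes "f \<in> borel_measurable M" and \<tau>: "\<tau> > 0"
  shows "ennreal \<tau> < rearrangement M f s \<longleftrightarrow> ennreal s < distrib_fun M f \<tau>"
proof
  assume "ennreal \<tau> < rearrangement M f s"
  then show "ennreal s < distrib_fun M f \<tau>"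
    unfolding rearrangement_def using \<tau> by (metis (mono_tags, lifting) Inf_lower image_eqI mem_Collect_eq not_le)
next
  assume "ennreal s < distrib_fun M f \<tau>"
  then obtain n where n: "ennreal s < distrib_fun M f (\<tau> + 1 / Suc n)"
    unfolding distrib_fun_eq_SUP[OF assms(1), of \<tau>] by (auto simp: less_SUP_iff)
  have "ennreal (\<tau> + 1 / Suc n) \<le> rearrangement M f s"
    unfolding rearrangement_def
  proof (rule Inf_greatest)
    fix y assume "y \<in> ennreal ` {\<tau>. 0 < \<tau> \<and> distrib_fun M f \<tau> \<le> ennreal s}"
    then obtain \<sigma> where \<sigma>: "y = ennreal \<sigma>" "distrib_fun M f \<sigma> \<le> ennreal s" by auto
    then have "\<tau> + 1 / Suc n < \<sigma>"
      using n distrib_fun_antimono[OF assms(1)] unfolding antimono_def by (meson not_le order.strict_trans2)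
    then show "ennreal (\<tau> + 1 / Suc n) \<le> y" using \<sigma> by (auto intro!: ennreal_leI)
  qed
  moreover have "ennreal \<tau> < ennreal (\<tau> + 1 / Suc n)"
    using \<tau> by (subst ennreal_less_iff) auto
  ultimately show "ennreal \<tau> < rearrangement M f s" by order
qed

lemma emeasure_rearrangement_superlevel:
  assumes "f \<in> borel_measurable M" and t: "t > 0" and \<tau>: "\<tau> > 0"
  shows "emeasure lborel {s \<in> {0<..<t}. ennreal \<tau> < rearrangement M f s} = min (ennreal t) (distrib_fun M f \<tau>)"
proof -
  let ?l = "distrib_fun M f \<tau>"
  have "{s \<in> {0<..<t}. ennreal \<tau> < rearrangement M f s} = {s \<in> {0<..<t}. ennreal s < ?l}"
    using less_rearrangement_iff[OF assms(1) \<tau>] by blast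
  also have "emeasure lborel \<dots> = min (ennreal t) ?l"
  proof (cases "ennreal t \<le> ?l")
    case True
    have "ennreal s < ?l" if "s < t" for s
      using ennreal_lessI[OF t that] True by (rule order.strict_trans2)
    then have "{s \<in> {0<..<t}. ennreal s < ?l} = {0<..<t}"
      by auto
    then show ?thesis using True t by (simp add: min_def)
  next
    case False
    then have "?l < ennreal t"
      by simp
    then obtain L where L: "?l = ennreal L" "L \<ge> 0" "L < t"
      by (cases ?l) (auto simp: ennreal_less_iff)
    then have "{s \<in> {0<..<t}. ennreal s < ?l} = {0<..<L}"
      by (auto simp: ennreal_less_iff)
    then show ?thesis using L by (simp add: min_def)
  qed
  finally show ?thesis .
qed

lemma nn_integral_rearrangement_layer_cake:
  assumes "f \<in> borel_measurable M" and t: "t > 0" and p: "p \<ge> 1"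
  shows "(\<integral>\<^sup>+ s \<in> {0<..<t}. epowr (rearrangement M f s) p \<partial>lborel)
    = (\<integral>\<^sup>+\<tau>. powr_weight p \<tau> * min (ennreal t) (distrib_fun M f \<tau>) \<partial>lborel)"
proof -
  let ?M = "restrict_space lborel {0<..<t}"
  have "sigma_finite_measure ?M"
    by (rule sigma_finite_measure_restrict_space[OF sigma_finite_lborel]) auto
  moreover have "rearrangement M f \<in> borel_measurable ?M"
    using borel_measurable_antimono_ennreal[OF rearrangement_antimono]
    by (intro measurable_restrict_space1) simp
  ultimately have "(\<integral>\<^sup>+ s. epowr (rearrangement M f s) p \<partial>?M)
      = (\<integral>\<^sup>+\<tau>. powr_weight p \<tau> * emeasure ?M {s \<in> space ?M. ennreal \<tau> < rearrangement M f s} \<partial>lborel)"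
    by (rule nn_integral_epowr_layer_cake[OF _ p])
  also have "\<dots> = (\<integral>\<^sup>+\<tau>. powr_weight p \<tau> * min (ennreal t) (distrib_fun M f \<tau>) \<partial>lborel)"
  proof (intro nn_integral_cong)
    fix \<tau> :: real
    show "powr_weight p \<tau> * emeasure ?M {s \<in> space ?M. ennreal \<tau> < rearrangement M f s}
        = powr_weight p \<tau> * min (ennreal t) (distrib_fun M f \<tau>)"
    proof (cases "\<tau> > 0")
      case True
      have "emeasure ?M {s \<in> space ?M. ennreal \<tau> < rearrangement M f s}
          = emeasure lborel {s \<in> {0<..<t}. ennreal \<tau> < rearrangement M f s}"
        by (subst emeasure_restrict_space) (auto simp: space_restrict_space)
      also have "\<dots> = min (ennreal t) (distrib_fun M f \<tau>)"
        by (rule emeasure_rearrangement_superlevel[OF assms(1) t True])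
      finally show ?thesis
        by (simp only:)
    qed simp
  qed
  finally show ?thesis
    by (simp add: nn_integral_restrict_space)
qed

lemma nn_integral_powr_layer_cake:
  assumes "sigma_finite_measure M" and [measurable]: "f \<in> borel_measurable M" and p: "p \<ge> 1"
  shows "(\<integral>\<^sup>+x. ennreal (\<bar>f x\<bar> powr p) \<partial>M) = (\<integral>\<^sup>+\<tau>. powr_weight p \<tau> * distrib_fun M f \<tau> \<partial>lborel)"
proof -
  have "(\<integral>\<^sup>+x. ennreal (\<bar>f x\<bar> powr p) \<partial>M) = (\<integral>\<^sup>+x. epowr (ennreal \<bar>f x\<bar>) p \<partial>M)"
    by (simp add: epowr_def)
  also have "\<dots> = (\<integral>\<^sup>+\<tau>. powr_weight p \<tau> * emeasure M {x\<in>space M. ennreal \<tau> < ennreal \<bar>f x\<bar>} \<partial>lborel)"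
    by (rule nn_integral_epowr_layer_cake[OF assms(1) p]) simp
  also have "\<dots> = (\<integral>\<^sup>+\<tau>. powr_weight p \<tau> * distrib_fun M f \<tau> \<partial>lborel)"
    by (rule nn_integral_cong) (auto simp: powr_weight_def indicator_def distrib_fun_def ennreal_less_iff)
  finally show ?thesis .
qed

lemma epowr_le_epowr_iff:
  assumes p: "p > 0"
  shows "epowr x p \<le> epowr y p \<longleftrightarrow> x \<le> y"
proof (cases x; cases y)
  fix a b assume ab: "x = ennreal a" "a \<ge> 0" "y = ennreal b" "b \<ge> 0"
  have "a powr p \<le> b powr p \<longleftrightarrow> a \<le> b"
    using ab p powr_mono2[of p a b] powr_less_mono2[of p b a] by (auto simp: not_le[symmetric])
  then show ?thesis
    using ab by (simp add: epowr_def ennreal_le_iff)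
qed (auto simp: epowr_def top_unique)

lemma min_add_le_add_min:
  fixes x y t :: "'a :: {linorder, ordered_ab_semigroup_add}"
  assumes "x \<le> y"
  shows "min t y + x \<le> y + min t x"
proof (cases "y \<le> t")
  case True
  then show ?thesis
    using assms by (simp add: min_absorb2 add.commute)
next
  case False
  then have "min t y + x = x + t"
    by (simp add: min_absorb1 add.commute)
  also have "\<dots> \<le> y + min t x"
    using assms False by (cases "x \<le> t") (simp_all add: min_def add_mono add.commute)
  finally show ?thesis .
qed

lemma nn_integral_min_le_of_crossing:
  fixes W lf lg :: "real \<Rightarrow> ennreal" and t :: ennreal and c :: real
  assumes [measurable]: "W \<in> borel_measurable borel" "lf \<in> borel_measurable borel" "lg \<in> borel_measurable borel"
    and anti: "antimono lf"
    and low: "\<And>\<tau>. 0 < \<tau> \<Longrightarrow> \<tau> < c \<Longrightarrow> lf \<tau> \<le> lg \<tau>"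
    and high: "\<And>\<tau>. \<tau> > c \<Longrightarrow> lg \<tau> \<le> lf \<tau>"
    and W0: "\<And>\<tau>. \<tau> \<le> 0 \<Longrightarrow> W \<tau> = 0"
    and le: "(\<integral>\<^sup>+\<tau>. W \<tau> * lg \<tau> \<partial>lborel) \<le> (\<integral>\<^sup>+\<tau>. W \<tau> * lf \<tau> \<partial>lborel)"
    and lf_finite: "(\<integral>\<^sup>+\<tau>. W \<tau> * lf \<tau> \<partial>lborel) \<noteq> \<infinity>"
  shows "(\<integral>\<^sup>+\<tau>. W \<tau> * min t (lg \<tau>) \<partial>lborel) \<le> (\<integral>\<^sup>+\<tau>. W \<tau> * min t (lf \<tau>) \<partial>lborel)"
proof (cases "\<exists>d>c. t < lf d")
  case True
  then obtain d where "d > c" "t < lf d" by auto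
  then have "t < lf \<tau>" if "\<tau> \<le> c" for \<tau>
    using anti that unfolding antimono_def by (meson order.strict_trans2 order.trans less_imp_le)
  then have "min t (lg \<tau>) \<le> min t (lf \<tau>)" for \<tau>
  proof (cases "\<tau> \<le> c")
    case False
    then show ?thesis
      using high[of \<tau>] by (intro min.mono) simp_all
  qed (simp add: min_absorb1 less_imp_le)
  then have "W \<tau> * min t (lg \<tau>) \<le> W \<tau> * min t (lf \<tau>)" for \<tau>
    by (rule mult_left_mono) simp
  then show ?thesis
    by (intro nn_integral_mono)
next
  case False
  then have lf_le: "lf \<tau> \<le> t" if "\<tau> > c" for \<tau>
    using that by (meson not_le)
  have "AE \<tau> in lborel. W \<tau> * min t (lg \<tau>) + W \<tau> * lf \<tau> \<le> W \<tau> * lg \<tau> + W \<tau> * min t (lf \<tau>)"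
    using AE_lborel_singleton[of c]
  proof eventually_elim
    case (elim \<tau>)
    consider "\<tau> \<le> 0" | "0 < \<tau>" "\<tau> < c" | "\<tau> > c"
      using elim by fastforce
    then show ?case
    proof cases
      case 2
      then have "min t (lg \<tau>) + lf \<tau> \<le> lg \<tau> + min t (lf \<tau>)"
        by (intro min_add_le_add_min low)
      then have "W \<tau> * (min t (lg \<tau>) + lf \<tau>) \<le> W \<tau> * (lg \<tau> + min t (lf \<tau>))"
        by (rule mult_left_mono) simp
      then show ?thesis
        by (simp add: distrib_left)
    next
      case 3
      then show ?thesis
        using high[of \<tau>] lf_le[of \<tau>] by (simp add: min_absorb2 add.commute)
    qed (simp add: W0)
  qed
  then have "(\<integral>\<^sup>+\<tau>. W \<tau> * min t (lg \<tau>) \<partial>lborel) + (\<integral>\<^sup>+\<tau>. W \<tau> * lf \<tau> \<partial>lborel)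
      \<le> (\<integral>\<^sup>+\<tau>. W \<tau> * lg \<tau> \<partial>lborel) + (\<integral>\<^sup>+\<tau>. W \<tau> * min t (lf \<tau>) \<partial>lborel)"
    by (subst (1 2) nn_integral_add[symmetric]) (auto intro: nn_integral_mono_AE)
  also have "\<dots> \<le> (\<integral>\<^sup>+\<tau>. W \<tau> * lf \<tau> \<partial>lborel) + (\<integral>\<^sup>+\<tau>. W \<tau> * min t (lf \<tau>) \<partial>lborel)"
    using le by (rule add_right_mono)
  finally show ?thesis
    using lf_finite by (simp add: add.commute ennreal_add_left_cancel_le)
qed

theorem mainTheorem3:
  fixes M :: "'a measure" and f g :: "'a \<Rightarrow> real" and p0 \<tau>0 :: real
  assumes "sigma_finite_measure M"
    and "p0 \<ge> 1"
    and "f \<in> borel_measurable M" and "g \<in> borel_measurable M"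
    and "\<tau>0 > 0"
    and "\<And>\<tau>. 0 < \<tau> \<Longrightarrow> \<tau> < \<tau>0 \<Longrightarrow> distrib_fun M f \<tau> \<le> distrib_fun M g \<tau>"
    and "\<And>\<tau>. \<tau> > \<tau>0 \<Longrightarrow> distrib_fun M f \<tau> \<ge> distrib_fun M g \<tau>"
    and "in_Lp M p0 f"
    and "Lp_norm M p0 f \<ge> Lp_norm M p0 g"
    and "t > 0"
  shows "(\<integral>\<^sup>+ s \<in> {0<..<t}. epowr (rearrangement M g s) p0 \<partial>lborel)
       \<le> (\<integral>\<^sup>+ s \<in> {0<..<t}. epowr (rearrangement M f s) p0 \<partial>lborel)"
proof -
  have "(\<integral>\<^sup>+x. ennreal (\<bar>g x\<bar> powr p0) \<partial>M) \<le> (\<integral>\<^sup>+x. ennreal (\<bar>f x\<bar> powr p0) \<partial>M)"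
    using assms(9) assms(2) by (simp add: Lp_norm_def epowr_le_epowr_iff)
  then have norm_le: "(\<integral>\<^sup>+\<tau>. powr_weight p0 \<tau> * distrib_fun M g \<tau> \<partial>lborel)
      \<le> (\<integral>\<^sup>+\<tau>. powr_weight p0 \<tau> * distrib_fun M f \<tau> \<partial>lborel)"
    by (simp only: nn_integral_powr_layer_cake[OF assms(1) assms(3) assms(2)]
      nn_integral_powr_layer_cake[OF assms(1) assms(4) assms(2)])
  have "(\<integral>\<^sup>+x. ennreal (\<bar>f x\<bar> powr p0) \<partial>M) \<noteq> \<infinity>"
    using assms(8) integrableD(2)[of M "\<lambda>x. \<bar>f x\<bar> powr p0"] by (simp add: in_Lp_def)
  then have norm_finite: "(\<integral>\<^sup>+\<tau>. powr_weight p0 \<tau> * distrib_fun M f \<tau> \<partial>lborel) \<noteq> \<infinity>"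
    unfolding nn_integral_powr_layer_cake[OF assms(1) assms(3) assms(2)] .
  have "(\<integral>\<^sup>+\<tau>. powr_weight p0 \<tau> * min (ennreal t) (distrib_fun M g \<tau>) \<partial>lborel)
      \<le> (\<integral>\<^sup>+\<tau>. powr_weight p0 \<tau> * min (ennreal t) (distrib_fun M f \<tau>) \<partial>lborel)"
    using borel_measurable_distrib_fun[OF assms(3)] borel_measurable_distrib_fun[OF assms(4)]
      distrib_fun_antimono[OF assms(3)] assms(6,7) powr_weight_nonpos norm_le norm_finite
    by (rule nn_integral_min_le_of_crossing[OF borel_measurable_powr_weight])
  then show ?thesis
    by (simp only: nn_integral_rearrangement_layer_cake[OF assms(3) assms(10) assms(2)]
      nn_integral_rearrangement_layer_cake[OF assms(4) assms(10) assms(2)])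
qed

end
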